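(* Let $(X,\mathcal{U})$ be a sequentially complete separated uniform space, with $\mathcal{F}$ and $\mathcal{V}$ as in the context, and let $\preceq$ be a partial order on $X$ with the property: if a nondecreasing sequence $\{x_n\}$ (i.e. $x_n\preceq x_{n+1}$ for all $n$) converges to some $x\in X$, then it has a subsequence $\{x_{n_k}\}$ with $x_{n_k}\preceq x$ for all $k\ge1$. Let $T:X\to X$ be a nondecreasing order Ćirić-contraction. Then $T$ has a fixed point if and only if there exists $x_0\in X$ with $x_0\preceq Tx_0$. Moreover, this fixed point is unique if (i) the functions $a_2$ and $a_3$ in the contractive condition coincide on $X\times X$; and (ii) each two elements of $X$ have either a lower or an upper bound.
   Context: A uniform space $(X,\mathcal{U})$ is a nonempty set $X$ with a uniformity $\mathcal{U}$ on $X$. For $U,V\subseteq X\times X$, $\Delta(X)=\{(x,x):x\in X\}$ and $U\circ V=\{(x,y):\exists z\in X,\ (x,z)\in V,\ (z,y)\in U\}$. $X$ is separated if $\bigcap\mathcal{U}=\Delta(X)$. A sequence $\{x_n\}$ converges to $x$ if for every $U\in\mathcal{U}$ there is $N$ with $(x_n,x)\in U$ for $n\ge N$; it is Cauchy if for every $U\in\mathcal{U}$ there is $N$ with $(x_m,x_n)\in U$ for $m,n\ge N$; $X$ is sequentially complete if every Cauchy sequence converges. $\mathcal{F}$ is a nonempty collection of (uniformly continuous) pseudometrics on $X$ generating $\mathcal{U}$, and $\mathcal{V}$ is the family of all sets $V=\bigcap_{i=1}^m\{(x,y)\in X\times X:\rho_i(x,y)<r_i\}$ with $m\ge1$, $\rho_i\in\mathcal{F}$,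 $r_i>0$; $\mathcal{V}$ is a base for $\mathcal{U}$. For such $V$ and $\beta>0$, $\beta V=\bigcap_{i=1}^m\{(x,y):\rho_i(x,y)<\beta r_i\}$. A map $T:X\to X$ is a nondecreasing order Ćirić-contraction if (a) $x\preceq y$ implies $Tx\preceq Ty$; and (b) there are positive-valued functions $a_1,a_2,a_3,a_4$ on $X\times X$ with $\sup\{a_1(x,y)+a_2(x,y)+a_3(x,y)+2a_4(x,y):x,y\in X\}<1$ such that for all $x,y\in X$ with $x\preceq y$ and all $V_1,\dots,V_5\in\mathcal{V}$: if $(x,y)\in V_1$, $(x,Tx)\in V_2$, $(y,Ty)\in V_3$, $(x,Ty)\in V_4$, $(y,Tx)\in V_5$, then $(Tx,Ty)\in a_1(x,y)V_1\circ a_2(x,y)V_2\circ a_3(x,y)V_3\circ a_4(x,y)V_4\circ a_4(x,y)V_5$. *)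

theory Defs
  imports Complex_Main
begin

text \<open>The space X is the whole (nonempty) type 'a. A pseudometric on X.\<close>
definition pseudometric :: "('a \<Rightarrow> 'a \<Rightarrow> real) \<Rightarrow> bool" where
  "pseudometric \<rho> \<longleftrightarrow> (\<forall>x. \<rho> x x = 0) \<and> (\<forall>x y. 0 \<le> \<rho> x y) \<and>
     (\<forall>x y. \<rho> x y = \<rho> y x) \<and> (\<forall>x y z. \<rho> x z \<le> \<rho> x y + \<rho> y z)"

text \<open>A member V of the base \<V> is presented by a nonempty finite list of pairs
  (\<rho>_i, r_i) with \<rho>_i in F and r_i > 0.\<close>
definition Vrep :: "('a \<Rightarrow> 'a \<Rightarrow> real) set \<Rightarrow> (('a \<Rightarrow> 'a \<Rightarrow> real) \<times> real) list \<Rightarrow> bool" where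
  "Vrep F rs \<longleftrightarrow> rs \<noteq> [] \<and> (\<forall>(\<rho>, r) \<in> set rs. \<rho> \<in> F \<and> 0 < r)"

definition vset :: "(('a \<Rightarrow> 'a \<Rightarrow> real) \<times> real) list \<Rightarrow> ('a \<times> 'a) set" where
  "vset rs = {(x, y). \<forall>(\<rho>, r) \<in> set rs. \<rho> x y < r}"

definition vscale :: "real \<Rightarrow> (('a \<Rightarrow> 'a \<Rightarrow> real) \<times> real) list \<Rightarrow> (('a \<Rightarrow> 'a \<Rightarrow> real) \<times> real) list" where
  "vscale \<beta> rs = map (\<lambda>(\<rho>, r). (\<rho>, \<beta> * r)) rs"

definition ucomp :: "('a \<times> 'a) set \<Rightarrow> ('a \<times> 'a) set \<Rightarrow> ('a \<times> 'a) set" (infixr "\<circ>\<^sub>U" 75) where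
  "U \<circ>\<^sub>U V = {(x, y). \<exists>z. (x, z) \<in> V \<and> (z, y) \<in> U}"

definition unif :: "('a \<Rightarrow> 'a \<Rightarrow> real) set \<Rightarrow> ('a \<times> 'a) set set" where
  "unif F = {W. \<exists>rs. Vrep F rs \<and> vset rs \<subseteq> W}"

definition separated :: "('a \<Rightarrow> 'a \<Rightarrow> real) set \<Rightarrow> bool" where
  "separated F \<longleftrightarrow> \<Inter> (unif F) = Id"

definition uconv :: "('a \<Rightarrow> 'a \<Rightarrow> real) set \<Rightarrow> (nat \<Rightarrow> 'a) \<Rightarrow> 'a \<Rightarrow> bool" where
  "uconv F s x \<longleftrightarrow> (\<forall>U \<in> unif F. \<exists>N. \<forall>n\<ge>N. (s n, x) \<in> U)"

definition ucauchy :: "('a \<Rightarrow> 'a \<Rightarrow> real) set \<Rightarrow> (nat \<Rightarrow> 'a) \<Rightarrow> bool" where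
  "ucauchy F s \<longleftrightarrow> (\<forall>U \<in> unif F. \<exists>N. \<forall>m\<ge>N. \<forall>n\<ge>N. (s m, s n) \<in> U)"

definition seq_complete :: "('a \<Rightarrow> 'a \<Rightarrow> real) set \<Rightarrow> bool" where
  "seq_complete F \<longleftrightarrow> (\<forall>s. ucauchy F s \<longrightarrow> (\<exists>x. uconv F s x))"

definition ciric_contraction ::
  "('a \<Rightarrow> 'a \<Rightarrow> real) set \<Rightarrow> ('a::order \<Rightarrow> 'a) \<Rightarrow>
   ('a \<Rightarrow> 'a \<Rightarrow> real) \<Rightarrow> ('a \<Rightarrow> 'a \<Rightarrow> real) \<Rightarrow> ('a \<Rightarrow> 'a \<Rightarrow> real) \<Rightarrow> ('a \<Rightarrow> 'a \<Rightarrow> real) \<Rightarrow> bool" where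
  "ciric_contraction F T a1 a2 a3 a4 \<longleftrightarrow>
     (\<forall>x y. x \<le> y \<longrightarrow> T x \<le> T y) \<and>
     (\<forall>x y. 0 < a1 x y \<and> 0 < a2 x y \<and> 0 < a3 x y \<and> 0 < a4 x y) \<and>
     bdd_above (range (\<lambda>(x, y). a1 x y + a2 x y + a3 x y + 2 * a4 x y)) \<and>
     (SUP (x, y). a1 x y + a2 x y + a3 x y + 2 * a4 x y) < 1 \<and>
     (\<forall>x y V1 V2 V3 V4 V5. x \<le> y \<longrightarrow>
        Vrep F V1 \<longrightarrow> Vrep F V2 \<longrightarrow> Vrep F V3 \<longrightarrow> Vrep F V4 \<longrightarrow> Vrep F V5 \<longrightarrow>
        (x, y) \<in> vset V1 \<longrightarrow> (x, T x) \<in> vset V2 \<longrightarrow> (y, T y) \<in> vset V3 \<longrightarrow>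
        (x, T y) \<in> vset V4 \<longrightarrow> (y, T x) \<in> vset V5 \<longrightarrow>
        (T x, T y) \<in> vset (vscale (a1 x y) V1) \<circ>\<^sub>U vset (vscale (a2 x y) V2) \<circ>\<^sub>U
                      vset (vscale (a3 x y) V3) \<circ>\<^sub>U vset (vscale (a4 x y) V4) \<circ>\<^sub>U
                      vset (vscale (a4 x y) V5))"

end

theory Submission
  imports Defs
begin

(* Letting the radii of the basic entourages shrink turns the uniform Ciric condition into the
   inequality  rho(Tx,Ty) <= a1 rho(x,y) + a2 rho(x,Tx) + a3 rho(y,Ty) + a4 (rho(x,Ty) + rho(y,Tx))
   for every rho in F and every x <= y.  Starting from x0 <= T x0 the Picard iterates increase, so
   consecutive iterates are comparable and their rho-distances shrink geometrically with ratio
   L = sup (a1 + a2 + a3 + 2 a4) < 1.  The orbit is therefore Cauchy; order regularity makes the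
   iterates comparable with the limit x, and the inequality applied to them forces rho(x,Tx) = 0.
   If a2 = a3, the same inequality makes a fixed point attract the orbit of every point comparable
   with it, so two fixed points with a common lower or upper bound coincide. *)

lemma pseudometric_refl: "pseudometric \<rho> \<Longrightarrow> \<rho> x x = 0"
  and pseudometric_nonneg: "pseudometric \<rho> \<Longrightarrow> 0 \<le> \<rho> x y"
  and pseudometric_sym: "pseudometric \<rho> \<Longrightarrow> \<rho> x y = \<rho> y x"
  and pseudometric_triangle: "pseudometric \<rho> \<Longrightarrow> \<rho> x z \<le> \<rho> x y + \<rho> y z"
  by (simp_all add: pseudometric_def)

lemma pseudometric_le_sum_steps:
  assumes "pseudometric \<rho>" "m \<le> n"
  shows "\<rho> (s m) (s n) \<le> (\<Sum>k=m..<n. \<rho> (s k) (s (Suc k)))"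
  using assms(2)
proof (induction n rule: dec_induct)
  case base
  then show ?case using pseudometric_refl[OF assms(1)] by simp
next
  case (step k)
  then show ?case
    using pseudometric_triangle[OF assms(1), where x = "s m" and y = "s k" and z = "s (Suc k)"] by simp
qed

lemma vset_single: "vset [(\<rho>, r)] = {(x, y). \<rho> x y < r}"
  by (simp add: vset_def)

lemma vset_single_in_unif: "\<rho> \<in> F \<Longrightarrow> 0 < r \<Longrightarrow> vset [(\<rho>, r)] \<in> unif F"
  unfolding unif_def Vrep_def by (auto intro!: exI[of _ "[(\<rho>, r)]"])

lemma eventually_in_unif_iff:
  "(\<forall>W\<in>unif F. eventually (\<lambda>i. f i \<in> W) net) \<longleftrightarrow>
   (\<forall>\<rho>\<in>F. \<forall>r>0. eventually (\<lambda>i. \<rho> (fst (f i)) (snd (f i)) < r) net)"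
proof safe
  fix \<rho> and r :: real
  assume "\<forall>W\<in>unif F. eventually (\<lambda>i. f i \<in> W) net" "\<rho> \<in> F" "0 < r"
  then have "eventually (\<lambda>i. f i \<in> vset [(\<rho>, r)]) net"
    using vset_single_in_unif by blast
  then show "eventually (\<lambda>i. \<rho> (fst (f i)) (snd (f i)) < r) net"
    by (rule eventually_mono) (auto simp: vset_single)
next
  fix W
  assume small: "\<forall>\<rho>\<in>F. \<forall>r>0. eventually (\<lambda>i. \<rho> (fst (f i)) (snd (f i)) < r) net"
    and "W \<in> unif F"
  then obtain rs where rs: "Vrep F rs" "vset rs \<subseteq> W"
    by (auto simp: unif_def)
  have "\<forall>p\<in>set rs. eventually (\<lambda>i. fst p (fst (f i)) (snd (f i)) < snd p) net"
    using rs(1) small by (auto simp: Vrep_def)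
  then have "eventually (\<lambda>i. \<forall>p\<in>set rs. fst p (fst (f i)) (snd (f i)) < snd p) net"
    by (rule eventually_ball_finite[rotated]) simp
  then show "eventually (\<lambda>i. f i \<in> W) net"
    by (rule eventually_mono) (use rs(2) in \<open>force simp: vset_def\<close>)
qed

lemma uconv_imp_tendsto_zero:
  assumes "uconv F s x" "\<rho> \<in> F" "pseudometric \<rho>"
  shows "(\<lambda>n. \<rho> (s n) x) \<longlonglongrightarrow> 0"
proof (rule order_tendstoI)
  have "\<forall>W\<in>unif F. eventually (\<lambda>n. (s n, x) \<in> W) sequentially"
    using assms(1) by (simp add: uconv_def eventually_sequentially)
  then show "eventually (\<lambda>n. \<rho> (s n) x < r) sequentially" if "0 < r" for r
    using eventually_in_unif_iff[where f = "\<lambda>n. (s n, x)"] assms(2) that by simp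
  show "eventually (\<lambda>n. r < \<rho> (s n) x) sequentially" if "r < 0" for r
    using that pseudometric_nonneg[OF assms(3)] by (simp add: order_less_le_trans)
qed

lemma ucauchyI:
  assumes "\<forall>\<rho>\<in>F. \<forall>e>0. \<exists>N. \<forall>m\<ge>N. \<forall>n\<ge>N. \<rho> (s m) (s n) < e"
  shows "ucauchy F s"
proof -
  have "\<forall>W\<in>unif F. eventually (\<lambda>p. (s (snd p), s (fst p)) \<in> W) (sequentially \<times>\<^sub>F sequentially)"
    using assms by (subst eventually_in_unif_iff) (simp add: eventually_prod_sequentially)
  then show ?thesis
    by (simp add: ucauchy_def eventually_prod_sequentially)
qed

lemma ucauchy_if_summable_steps:
  assumes pm: "\<forall>\<rho>\<in>F. pseudometric \<rho>"
    and summable: "\<forall>\<rho>\<in>F. summable (\<lambda>k. \<rho> (s k) (s (Suc k)))"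
  shows "ucauchy F s"
proof (rule ucauchyI, intro ballI allI impI)
  fix \<rho> and e :: real
  assume "\<rho> \<in> F" "0 < e"
  then have \<rho>: "pseudometric \<rho>" and "summable (\<lambda>k. \<rho> (s k) (s (Suc k)))"
    using pm summable by auto
  then obtain N where N: "\<forall>m\<ge>N. \<forall>n. \<bar>\<Sum>k=m..<n. \<rho> (s k) (s (Suc k))\<bar> < e"
    using \<open>0 < e\<close> by (auto simp: summable_Cauchy)
  have "\<rho> (s m) (s n) < e" if "N \<le> m" "m \<le> n" for m n
  proof -
    have "\<bar>\<Sum>k=m..<n. \<rho> (s k) (s (Suc k))\<bar> < e"
      using N \<open>N \<le> m\<close> by blast
    then show ?thesis
      using pseudometric_le_sum_steps[OF \<rho> \<open>m \<le> n\<close>, where s = s] by linarith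
  qed
  then show "\<exists>N. \<forall>m\<ge>N. \<forall>n\<ge>N. \<rho> (s m) (s n) < e"
    by (metis nle_le pseudometric_sym[OF \<rho>])
qed

lemma separated_eqI:
  assumes "separated F" "\<forall>\<rho>\<in>F. \<rho> x y = 0"
  shows "x = y"
proof -
  have "(x, y) \<in> W" if W: "W \<in> unif F" for W
  proof -
    obtain rs where "Vrep F rs" "vset rs \<subseteq> W"
      using W unfolding unif_def by blast
    with assms(2) show ?thesis by (force simp: Vrep_def vset_def)
  qed
  then show ?thesis
    using assms(1) by (auto simp: separated_def)
qed

lemma le_mult_if_le_affine_self:
  fixes d e p q L :: real
  assumes "e \<le> p * d + q * e" "p + q \<le> L" "L < 1" "0 \<le> p" "0 \<le> q" "0 \<le> d"
  shows "e \<le> L * d"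
proof -
  have "L * q \<le> q"
    using assms(2-5) by (intro mult_left_le_one_le) auto
  have "(1 - q) * e \<le> p * d"
    using assms(1) by (simp add: algebra_simps)
  also have "\<dots> \<le> (L - L * q) * d"
    using assms(2,6) \<open>L * q \<le> q\<close> by (intro mult_right_mono) auto
  also have "\<dots> = (1 - q) * (L * d)"
    by (simp add: algebra_simps)
  finally show ?thesis
    using assms(2-4) by simp
qed

locale ordered_ciric_contraction =
  fixes F :: "('a::order \<Rightarrow> 'a \<Rightarrow> real) set" and T :: "'a \<Rightarrow> 'a"
    and a1 a2 a3 a4 :: "'a \<Rightarrow> 'a \<Rightarrow> real" and L :: real
  assumes pseudometric: "\<rho> \<in> F \<Longrightarrow> pseudometric \<rho>"
    and contraction: "ciric_contraction F T a1 a2 a3 a4"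
    and coeff_sum_le: "a1 x y + a2 x y + a3 x y + 2 * a4 x y \<le> L"
    and ratio_less_one: "L < 1"
begin

lemma mono_T: "mono T"
  using contraction by (auto simp: ciric_contraction_def intro: monoI)

lemma coeff_pos: "0 < a1 x y" "0 < a2 x y" "0 < a3 x y" "0 < a4 x y"
  using contraction by (auto simp: ciric_contraction_def)

lemma metric_contraction:
  assumes "\<rho> \<in> F" "x \<le> y"
  shows "\<rho> (T x) (T y) \<le> a1 x y * \<rho> x y + a2 x y * \<rho> x (T x) + a3 x y * \<rho> y (T y)
                          + a4 x y * (\<rho> x (T y) + \<rho> y (T x))"
    (is "_ \<le> ?R")
proof (rule field_le_epsilon)
  have \<rho>: "pseudometric \<rho>"
    using assms(1) by (rule pseudometric)
  define S where "S = a1 x y + a2 x y + a3 x y + 2 * a4 x y"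
  have "0 < S"
    using coeff_pos[of x y] by (simp add: S_def)
  fix e :: real
  assume "0 < e"
  define \<epsilon> where "\<epsilon> = e / S"
  have "0 < \<epsilon>"
    using \<open>0 < e\<close> \<open>0 < S\<close> by (simp add: \<epsilon>_def)
  \<comment> \<open>test the condition on the single-pseudometric entourages of radius \<open>\<rho> a b + \<epsilon>\<close>\<close>
  have basic: "Vrep F [(\<rho>, \<rho> a b + \<epsilon>)]" "(a, b) \<in> vset [(\<rho>, \<rho> a b + \<epsilon>)]" for a b
    using assms(1) \<open>0 < \<epsilon>\<close> pseudometric_nonneg[OF \<rho>, of a b]
    by (auto simp: Vrep_def vset_single)
  have "(T x, T y) \<in> vset (vscale (a1 x y) [(\<rho>, \<rho> x y + \<epsilon>)]) \<circ>\<^sub>U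
      vset (vscale (a2 x y) [(\<rho>, \<rho> x (T x) + \<epsilon>)]) \<circ>\<^sub>U vset (vscale (a3 x y) [(\<rho>, \<rho> y (T y) + \<epsilon>)]) \<circ>\<^sub>U
      vset (vscale (a4 x y) [(\<rho>, \<rho> x (T y) + \<epsilon>)]) \<circ>\<^sub>U vset (vscale (a4 x y) [(\<rho>, \<rho> y (T x) + \<epsilon>)])"
    using contraction assms(2) basic unfolding ciric_contraction_def by blast
  then obtain z1 z2 z3 z4 where
    "\<rho> (T x) z4 < a4 x y * (\<rho> y (T x) + \<epsilon>)" "\<rho> z4 z3 < a4 x y * (\<rho> x (T y) + \<epsilon>)"
    "\<rho> z3 z2 < a3 x y * (\<rho> y (T y) + \<epsilon>)" "\<rho> z2 z1 < a2 x y * (\<rho> x (T x) + \<epsilon>)"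
    "\<rho> z1 (T y) < a1 x y * (\<rho> x y + \<epsilon>)"
    by (auto simp: ucomp_def vset_single vscale_def)
  moreover have "\<rho> (T x) (T y) \<le> \<rho> (T x) z4 + \<rho> z4 z3 + \<rho> z3 z2 + \<rho> z2 z1 + \<rho> z1 (T y)"
    by (smt (verit) pseudometric_triangle[OF \<rho>])
  ultimately have "\<rho> (T x) (T y) \<le> ?R + \<epsilon> * S"
    by (simp add: S_def algebra_simps)
  then show "\<rho> (T x) (T y) \<le> ?R + e"
    using \<open>0 < S\<close> by (simp add: \<epsilon>_def)
qed

lemma orbit_step_contracts:
  assumes "\<rho> \<in> F" "x \<le> T x"
  shows "\<rho> (T x) (T (T x)) \<le> L * \<rho> x (T x)"
proof (rule le_mult_if_le_affine_self)
  have \<rho>: "pseudometric \<rho>"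
    using assms(1) by (rule pseudometric)
  have "\<rho> x (T (T x)) \<le> \<rho> x (T x) + \<rho> (T x) (T (T x))"
    by (rule pseudometric_triangle[OF \<rho>])
  then have "a4 x (T x) * \<rho> x (T (T x)) \<le> a4 x (T x) * (\<rho> x (T x) + \<rho> (T x) (T (T x)))"
    using coeff_pos(4) by (rule mult_left_mono[OF _ less_imp_le])
  then show "\<rho> (T x) (T (T x)) \<le> (a1 x (T x) + a2 x (T x) + a4 x (T x)) * \<rho> x (T x)
                                   + (a3 x (T x) + a4 x (T x)) * \<rho> (T x) (T (T x))"
    using metric_contraction[OF assms] pseudometric_refl[OF \<rho>, of "T x"]
    by (simp add: algebra_simps)
  show "a1 x (T x) + a2 x (T x) + a4 x (T x) + (a3 x (T x) + a4 x (T x)) \<le> L"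
    using coeff_sum_le[of x "T x"] by simp
qed (use ratio_less_one coeff_pos[of x "T x"] pseudometric_nonneg[OF pseudometric[OF assms(1)]] in auto)

lemma orbit_le_next: "x0 \<le> T x0 \<Longrightarrow> (T ^^ n) x0 \<le> T ((T ^^ n) x0)"
  using funpow_mono2[OF mono_T, of n "Suc n" x0 x0] by simp

lemma summable_orbit_steps:
  assumes "\<rho> \<in> F" "x0 \<le> T x0"
  shows "summable (\<lambda>n. \<rho> ((T ^^ n) x0) ((T ^^ Suc n) x0))"
proof (rule summable_ratio_test[OF ratio_less_one])
  fix n
  have "\<rho> ((T ^^ Suc n) x0) ((T ^^ Suc (Suc n)) x0) \<le> L * \<rho> ((T ^^ n) x0) ((T ^^ Suc n) x0)"
    using orbit_step_contracts[OF assms(1) orbit_le_next[OF assms(2), of n]] by simp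
  then show "norm (\<rho> ((T ^^ Suc n) x0) ((T ^^ Suc (Suc n)) x0))
             \<le> L * norm (\<rho> ((T ^^ n) x0) ((T ^^ Suc n) x0))"
    using pseudometric_nonneg[OF pseudometric[OF assms(1)]] by simp
qed

lemma fixed_at_limit_from_below:
  assumes "\<rho> \<in> F" and below: "\<And>k. t k \<le> y"
    and lim: "(\<lambda>k. \<rho> (t k) y) \<longlonglongrightarrow> 0" and lim_T: "(\<lambda>k. \<rho> (T (t k)) y) \<longlonglongrightarrow> 0"
  shows "\<rho> y (T y) = 0"
proof -
  have \<rho>: "pseudometric \<rho>"
    using assms(1) by (rule pseudometric)
  define D where "D = \<rho> y (T y)"
  have bound: "D \<le> L * D + 2 * \<rho> (t k) y + 2 * \<rho> (T (t k)) y" for k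
  proof -
    define x u v where "x = t k" and "u = \<rho> (t k) y" and "v = \<rho> (T (t k)) y"
    have "x \<le> y"
      using below by (simp add: x_def)
    have dist: "D \<le> v + \<rho> (T x) (T y)" "\<rho> x (T x) \<le> u + v" "\<rho> x (T y) \<le> u + D"
      "\<rho> y (T x) = v" "\<rho> x y = u" "\<rho> y (T y) = D" "0 \<le> u" "0 \<le> v" "0 \<le> D"
      unfolding D_def u_def v_def x_def
      by (metis pseudometric_triangle[OF \<rho>] pseudometric_sym[OF \<rho>] pseudometric_nonneg[OF \<rho>])+
    note a = coeff_pos[of x y] coeff_sum_le[of x y]
    have "\<rho> (T x) (T y) \<le> a1 x y * u + a2 x y * (u + v) + a3 x y * D + a4 x y * (u + D + v)"
    proof -
      have "a2 x y * \<rho> x (T x) \<le> a2 x y * (u + v)"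
        "a4 x y * (\<rho> x (T y) + \<rho> y (T x)) \<le> a4 x y * (u + D + v)"
        using dist a by (intro mult_left_mono; simp)+
      then show ?thesis
        using metric_contraction[OF assms(1) \<open>x \<le> y\<close>] dist by simp
    qed
    also have "\<dots> = (a1 x y + a2 x y + a4 x y) * u + (a2 x y + a4 x y) * v + (a3 x y + a4 x y) * D"
      by (simp add: algebra_simps)
    also have "\<dots> \<le> u + v + L * D"
      using a ratio_less_one dist
      by (intro add_mono mult_left_le_one_le mult_right_mono) auto
    finally show ?thesis
      using dist(1,7,8) unfolding u_def v_def by linarith
  qed
  have "(\<lambda>k. L * D + 2 * \<rho> (t k) y + 2 * \<rho> (T (t k)) y) \<longlonglongrightarrow> L * D + 2 * 0 + 2 * 0"
    by (intro tendsto_intros lim lim_T)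
  then have "D \<le> L * D"
    using bound by (intro LIMSEQ_le_const) auto
  then show ?thesis
    using ratio_less_one pseudometric_nonneg[OF \<rho>] unfolding D_def
    by (smt (verit) mult_le_cancel_right1)
qed

lemma fixed_point_exists:
  assumes complete: "seq_complete F" and sep: "separated F"
    and regular: "\<forall>s x. (\<forall>n. s n \<le> s (Suc n)) \<and> uconv F s x \<longrightarrow>
                    (\<exists>\<phi>::nat \<Rightarrow> nat. strict_mono \<phi> \<and> (\<forall>k. s (\<phi> k) \<le> x))"
    and start: "x0 \<le> T x0"
  shows "\<exists>x. T x = x"
proof -
  define s where "s n = (T ^^ n) x0" for n
  have "ucauchy F s"
    using pseudometric summable_orbit_steps[OF _ start]
    by (intro ucauchy_if_summable_steps) (auto simp: s_def)
  then obtain x where x: "uconv F s x"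
    using complete by (auto simp: seq_complete_def)
  moreover have "s n \<le> s (Suc n)" for n
    using orbit_le_next[OF start] by (simp add: s_def)
  ultimately obtain \<phi> :: "nat \<Rightarrow> nat" where \<phi>: "strict_mono \<phi>" "\<And>k. s (\<phi> k) \<le> x"
    using regular by blast
  have "\<rho> x (T x) = 0" if "\<rho> \<in> F" for \<rho>
  proof (rule fixed_at_limit_from_below[OF that \<phi>(2)])
    have lim: "(\<lambda>n. \<rho> (s n) x) \<longlonglongrightarrow> 0"
      using uconv_imp_tendsto_zero[OF x that pseudometric[OF that]] .
    show "(\<lambda>k. \<rho> (s (\<phi> k)) x) \<longlonglongrightarrow> 0"
      using LIMSEQ_subseq_LIMSEQ[OF lim \<phi>(1)] by (simp add: comp_def)
    show "(\<lambda>k. \<rho> (T (s (\<phi> k))) x) \<longlonglongrightarrow> 0"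
      using LIMSEQ_subseq_LIMSEQ[OF LIMSEQ_Suc[OF lim] \<phi>(1)] by (simp add: comp_def s_def)
  qed
  then show ?thesis
    using separated_eqI[OF sep] by metis
qed

lemma fixed_point_attracts_comparable:
  assumes a23: "\<forall>x y. a2 x y = a3 x y" and fixed: "T p = p"
    and "\<rho> \<in> F" and comparable: "x \<le> p \<or> p \<le> x"
  shows "\<rho> (T x) p \<le> L * \<rho> x p"
proof -
  have \<rho>: "pseudometric \<rho>"
    using assms(3) by (rule pseudometric)
  have tri: "\<rho> x (T x) \<le> \<rho> x p + \<rho> (T x) p"
    by (metis pseudometric_triangle[OF \<rho>] pseudometric_sym[OF \<rho>])
  have nonneg: "0 \<le> \<rho> x p"
    by (rule pseudometric_nonneg[OF \<rho>])
  show ?thesis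
  proof (cases "x \<le> p")
    case True
    have "a2 x p * \<rho> x (T x) \<le> a2 x p * (\<rho> x p + \<rho> (T x) p)"
      using tri coeff_pos(2) by (rule mult_left_mono[OF _ less_imp_le])
    then have "\<rho> (T x) p \<le> (a1 x p + a2 x p + a4 x p) * \<rho> x p + (a2 x p + a4 x p) * \<rho> (T x) p"
      using metric_contraction[OF assms(3) True] fixed pseudometric_refl[OF \<rho>, of p]
        pseudometric_sym[OF \<rho>, of p "T x"]
      by (simp add: algebra_simps)
    then show ?thesis
      by (rule le_mult_if_le_affine_self)
        (use coeff_sum_le[of x p] coeff_pos[of x p] a23 ratio_less_one nonneg in auto)
  next
    case False
    with comparable have "p \<le> x" by simp
    have "a3 p x * \<rho> x (T x) \<le> a3 p x * (\<rho> x p + \<rho> (T x) p)"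
      using tri coeff_pos(3) by (rule mult_left_mono[OF _ less_imp_le])
    then have "\<rho> (T x) p \<le> (a1 p x + a3 p x + a4 p x) * \<rho> x p + (a3 p x + a4 p x) * \<rho> (T x) p"
      using metric_contraction[OF assms(3) \<open>p \<le> x\<close>] fixed pseudometric_refl[OF \<rho>, of p]
        pseudometric_sym[OF \<rho>, of p "T x"] pseudometric_sym[OF \<rho>, of p x]
      by (simp add: algebra_simps)
    then show ?thesis
      by (rule le_mult_if_le_affine_self)
        (use coeff_sum_le[of p x] coeff_pos[of p x] a23 ratio_less_one nonneg in auto)
  qed
qed

lemma orbit_tendsto_fixed_point:
  assumes a23: "\<forall>x y. a2 x y = a3 x y" and fixed: "T p = p"
    and "\<rho> \<in> F" and comparable: "z \<le> p \<or> p \<le> z"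
  shows "(\<lambda>n. \<rho> ((T ^^ n) z) p) \<longlonglongrightarrow> 0"
proof -
  have orbit_comparable: "(T ^^ n) z \<le> p \<or> p \<le> (T ^^ n) z" for n
  proof (induction n)
    case 0
    show ?case using comparable by simp
  next
    case (Suc n)
    then have "T ((T ^^ n) z) \<le> T p \<or> T p \<le> T ((T ^^ n) z)"
      using monoD[OF mono_T] by blast
    then show ?case using fixed by simp
  qed
  have "summable (\<lambda>n. \<rho> ((T ^^ n) z) p)"
  proof (rule summable_ratio_test[OF ratio_less_one])
    fix n
    show "norm (\<rho> ((T ^^ Suc n) z) p) \<le> L * norm (\<rho> ((T ^^ n) z) p)"
      using fixed_point_attracts_comparable[OF a23 fixed assms(3) orbit_comparable[of n]]
        pseudometric_nonneg[OF pseudometric[OF assms(3)]] by simp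
  qed
  then show ?thesis
    by (rule summable_LIMSEQ_zero)
qed

lemma fixed_point_unique:
  assumes sep: "separated F" and a23: "\<forall>x y. a2 x y = a3 x y"
    and bounded: "\<forall>x y::'a. (\<exists>z. z \<le> x \<and> z \<le> y) \<or> (\<exists>z. x \<le> z \<and> y \<le> z)"
    and "T p = p" "T q = q"
  shows "p = q"
proof (rule separated_eqI[OF sep], intro ballI)
  fix \<rho> assume "\<rho> \<in> F"
  then have \<rho>: "pseudometric \<rho>"
    by (rule pseudometric)
  obtain z where "z \<le> p \<or> p \<le> z" "z \<le> q \<or> q \<le> z"
    using bounded[rule_format, of p q] by blast
  then have "(\<lambda>n. \<rho> ((T ^^ n) z) p + \<rho> ((T ^^ n) z) q) \<longlonglongrightarrow> 0 + 0"
    using orbit_tendsto_fixed_point[OF a23 _ \<open>\<rho> \<in> F\<close>] assms(4,5) by (intro tendsto_add) auto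
  moreover have "\<rho> p q \<le> \<rho> ((T ^^ n) z) p + \<rho> ((T ^^ n) z) q" for n
    by (metis pseudometric_triangle[OF \<rho>] pseudometric_sym[OF \<rho>])
  ultimately have "\<rho> p q \<le> 0"
    by (intro LIMSEQ_le_const) auto
  then show "\<rho> p q = 0"
    using pseudometric_nonneg[OF \<rho>, of p q] by simp
qed

end

theorem corollary2:
  fixes F :: "('a::order \<Rightarrow> 'a \<Rightarrow> real) set"
    and T :: "'a \<Rightarrow> 'a"
    and a1 a2 a3 a4 :: "'a \<Rightarrow> 'a \<Rightarrow> real"
  assumes F_ne: "F \<noteq> {}"
    and F_pm: "\<forall>\<rho>\<in>F. pseudometric \<rho>"
    and complete: "seq_complete F"
    and sep: "separated F"
    and order_reg: "\<forall>s x. (\<forall>n. s n \<le> s (Suc n)) \<and> uconv F s x \<longrightarrow>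
                       (\<exists>\<phi>::nat \<Rightarrow> nat. strict_mono \<phi> \<and> (\<forall>k. s (\<phi> k) \<le> x))"
    and contr: "ciric_contraction F T a1 a2 a3 a4"
  shows "((\<exists>x. T x = x) \<longleftrightarrow> (\<exists>x0. x0 \<le> T x0)) \<and>
         ((\<forall>x y. a2 x y = a3 x y) \<and>
          (\<forall>x y::'a. (\<exists>z. z \<le> x \<and> z \<le> y) \<or> (\<exists>z. x \<le> z \<and> y \<le> z)) \<and>
          (\<exists>x0. x0 \<le> T x0) \<longrightarrow> (\<exists>!x. T x = x))"
proof -
  define L where "L = (SUP (x, y). a1 x y + a2 x y + a3 x y + 2 * a4 x y)"
  interpret ordered_ciric_contraction F T a1 a2 a3 a4 L
  proof
    have bdd: "bdd_above (range (\<lambda>(x, y). a1 x y + a2 x y + a3 x y + 2 * a4 x y))"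
      using contr by (simp add: ciric_contraction_def)
    show "a1 x y + a2 x y + a3 x y + 2 * a4 x y \<le> L" for x y
      using cSUP_upper[OF UNIV_I bdd, of "(x, y)"] by (simp add: L_def)
    show "L < 1"
      using contr by (simp add: ciric_contraction_def L_def)
  qed (use F_pm contr in auto)
  have "(\<exists>x. T x = x) \<longleftrightarrow> (\<exists>x0. x0 \<le> T x0)"
    using fixed_point_exists[OF complete sep order_reg] by (metis order_refl)
  moreover have "\<exists>!x. T x = x"
    if "\<forall>x y. a2 x y = a3 x y" "\<forall>x y::'a. (\<exists>z. z \<le> x \<and> z \<le> y) \<or> (\<exists>z. x \<le> z \<and> y \<le> z)"
      and "\<exists>x. T x = x"
    using fixed_point_unique[OF sep that(1,2)] that(3) by blast
  ultimately show ?thesis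
    by blast
qed

end
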